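(* There is a universal constant $c<\infty$ with the following property: if $f\in C^\infty(H^2)$ is a positive solution of $x^{-3}(x^3f_x)_x+f_{yy}=0$ (equivalently $f_{xx}+f_{yy}+3x^{-1}f_x=0$) on $H^2$, then $$x\,|\nabla\log f|(x,y)<c\quad\text{for all }(x,y)\in H^2,$$ where $\nabla$ is the Euclidean gradient in $(x,y)$.
   Context: $H^2=\{(x,y)\in\mathbb{R}^2: x>0\}$ is the open right half-plane. *)

theory Defs
  imports "HOL-Analysis.Analysis"
begin

definition H2 :: "(real \<times> real) set" where
  "H2 = {p. fst p > 0}"

definition px :: "(real \<times> real \<Rightarrow> real) \<Rightarrow> real \<times> real \<Rightarrow> real" where
  "px g p = deriv (\<lambda>t. g (t, snd p)) (fst p)"

definition py :: "(real \<times> real \<Rightarrow> real) \<Rightarrow> real \<times> real \<Rightarrow> real" where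
  "py g p = deriv (\<lambda>t. g (fst p, t)) (snd p)"

text \<open>Iterated partial derivative along a list of directions (True = x, False = y).\<close>
fun iter_partial :: "bool list \<Rightarrow> (real \<times> real \<Rightarrow> real) \<Rightarrow> real \<times> real \<Rightarrow> real" where
  "iter_partial [] g = g"
| "iter_partial (d # ds) g = (if d then px else py) (iter_partial ds g)"

definition smooth_on :: "(real \<times> real) set \<Rightarrow> (real \<times> real \<Rightarrow> real) \<Rightarrow> bool" where
  "smooth_on S g \<longleftrightarrow> (\<forall>ds. iter_partial ds g differentiable_on S)"

end

theory Submission
  imports Defs
begin

text \<open>Bernstein's maximum-principle argument. Let \<open>W = |\<nabla>log f|\<^sup>2\<close> and let
  \<open>\<psi> = 1 - |z - z\<^sub>0|\<^sup>2/r\<^sup>2\<close> be a cut-off on the disc of radius \<open>r = x\<^sub>0/2\<close> about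
  \<open>z\<^sub>0 = (x\<^sub>0, y\<^sub>0)\<close>, which lies in \<open>H2\<close>. Then \<open>\<psi>\<^sup>2 W\<close> vanishes on the boundary circle and
  attains an interior maximum. There the first- and second-derivative tests in \<open>x\<close> and \<open>y\<close>,
  combined with a Bochner-type identity for \<open>L = \<Delta> + (3/x) \<partial>\<^sub>x\<close> (which gives
  \<open>L W \<ge> (2/5) W\<^sup>2 - 2 \<nabla>log f \<cdot> \<nabla>W\<close>), bound \<open>\<psi>\<^sup>2 W\<close> by \<open>620/r\<^sup>2\<close>; this uses \<open>x > r\<close> on
  the disc to control the drift term. Evaluating at the centre gives \<open>x\<^sub>0\<^sup>2 W(z\<^sub>0) \<le> 2480\<close>.\<close>

section \<open>Partial derivatives and smoothness\<close>

lemma has_real_derivative_px: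
  assumes "g differentiable (at (t, y))"
  shows "((\<lambda>s. g (s, y)) has_real_derivative px g (t, y)) (at t)"
proof -
  obtain D where D: "(g has_derivative D) (at (t, y))"
    using assms unfolding differentiable_def by blast
  have "((\<lambda>s. (s, y)) has_derivative (\<lambda>h. (h, 0))) (at t)"
    by (auto intro!: derivative_eq_intros)
  from has_derivative_compose[OF this D]
  have "((\<lambda>s. g (s, y)) has_derivative (\<lambda>h. D (h, 0))) (at t)" .
  moreover have "(\<lambda>h. D (h, 0)) = (\<lambda>h. D (1, 0) * h)"
  proof
    fix h :: real
    have "D (h, 0) = h *\<^sub>R D (1, 0)"
      using linear_scale[OF has_derivative_linear[OF D], of h "(1, 0)"] by simp
    then show "D (h, 0) = D (1, 0) * h"
      by simp
  qed
  ultimately have "((\<lambda>s. g (s, y)) has_real_derivative D (1, 0)) (at t)"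
    by (simp add: has_field_derivative_def)
  then show ?thesis
    unfolding px_def by (simp add: DERIV_imp_deriv)
qed

lemma has_real_derivative_py:
  assumes "g differentiable (at (x, t))"
  shows "((\<lambda>s. g (x, s)) has_real_derivative py g (x, t)) (at t)"
proof -
  obtain D where D: "(g has_derivative D) (at (x, t))"
    using assms unfolding differentiable_def by blast
  have "((\<lambda>s. (x, s)) has_derivative (\<lambda>h. (0, h))) (at t)"
    by (auto intro!: derivative_eq_intros)
  from has_derivative_compose[OF this D]
  have "((\<lambda>s. g (x, s)) has_derivative (\<lambda>h. D (0, h))) (at t)" .
  moreover have "(\<lambda>h. D (0, h)) = (\<lambda>h. D (0, 1) * h)"
  proof
    fix h :: real
    have "D (0, h) = h *\<^sub>R D (0, 1)"
      using linear_scale[OF has_derivative_linear[OF D], of h "(0, 1)"] by simp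
    then show "D (0, h) = D (0, 1) * h"
      by simp
  qed
  ultimately have "((\<lambda>s. g (x, s)) has_real_derivative D (0, 1)) (at t)"
    by (simp add: has_field_derivative_def)
  then show ?thesis
    unfolding py_def by (simp add: DERIV_imp_deriv)
qed

lemma smooth_on_px:
  assumes "smooth_on S g"
  shows "smooth_on S (px g)"
proof -
  have "iter_partial ds (px g) = iter_partial (ds @ [True]) g" for ds
    by (induction ds) auto
  with assms show ?thesis
    unfolding smooth_on_def by metis
qed

lemma smooth_on_py:
  assumes "smooth_on S g"
  shows "smooth_on S (py g)"
proof -
  have "iter_partial ds (py g) = iter_partial (ds @ [False]) g" for ds
    by (induction ds) auto
  with assms show ?thesis
    unfolding smooth_on_def by metis
qed

lemma smooth_on_imp_differentiable:
  "smooth_on S g \<Longrightarrow> open S \<Longrightarrow> p \<in> S \<Longrightarrow> g differentiable (at p)"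
  unfolding smooth_on_def
  by (metis iter_partial.simps(1) differentiable_on_eq_differentiable_at)

lemma smooth_on_imp_continuous_on: "smooth_on S g \<Longrightarrow> open S \<Longrightarrow> continuous_on S g"
  by (meson continuous_at_imp_continuous_on differentiable_imp_continuous_within
      smooth_on_imp_differentiable)

lemma open_H2: "open H2"
  unfolding H2_def by (intro open_Collect_less continuous_intros)

lemma mem_H2 [simp]: "(a, b) \<in> H2 \<longleftrightarrow> a > 0"
  unfolding H2_def by simp

lemma dist_Pair_le_abs_sum:
  fixes a b x y :: real
  shows "dist (a, b) (x, y) \<le> \<bar>a - x\<bar> + \<bar>b - y\<bar>"
  using sqrt_sum_squares_le_sum_abs[of "a - x" "b - y"]
  by (simp add: dist_Pair_Pair dist_real_def)

lemma second_difference_eq_mixed_partial: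
  assumes sm: "smooth_on S g" and S: "open S" and h: "h > 0"
    and box: "{x..x + h} \<times> {y..y + h} \<subseteq> S"
  defines "\<Delta> \<equiv> g (x + h, y + h) - g (x, y + h) - g (x + h, y) + g (x, y)"
  shows "\<exists>a b. a \<in> {x<..<x + h} \<and> b \<in> {y<..<y + h} \<and> \<Delta> = h\<^sup>2 * py (px g) (a, b)"
    and "\<exists>a b. a \<in> {x<..<x + h} \<and> b \<in> {y<..<y + h} \<and> \<Delta> = h\<^sup>2 * px (py g) (a, b)"
proof -
  have diff: "\<And>g s t. smooth_on S g \<Longrightarrow> s \<in> {x..x + h} \<Longrightarrow> t \<in> {y..y + h} \<Longrightarrow>
      g differentiable (at (s, t))"
    using box S smooth_on_imp_differentiable by blast
  have "\<exists>a. x < a \<and> a < x + h \<and> (g (x + h, y + h) - g (x + h, y)) - (g (x, y + h) - g (x, y))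
      = (x + h - x) * (px g (a, y + h) - px g (a, y))"
    by (rule MVT2) (use h in \<open>auto intro!: derivative_eq_intros has_real_derivative_px diff sm\<close>)
  then obtain a where a: "x < a" "a < x + h" "\<Delta> = h * (px g (a, y + h) - px g (a, y))"
    unfolding \<Delta>_def by (auto simp: algebra_simps)
  have "\<exists>b. y < b \<and> b < y + h \<and> px g (a, y + h) - px g (a, y) = (y + h - y) * py (px g) (a, b)"
    by (rule MVT2) (use h a in \<open>auto intro!: has_real_derivative_py diff smooth_on_px sm\<close>)
  with a show "\<exists>a b. a \<in> {x<..<x + h} \<and> b \<in> {y<..<y + h} \<and> \<Delta> = h\<^sup>2 * py (px g) (a, b)"
    by (auto simp: power2_eq_square)
  have "\<exists>b. y < b \<and> b < y + h \<and> (g (x + h, y + h) - g (x, y + h)) - (g (x + h, y) - g (x, y))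
      = (y + h - y) * (py g (x + h, b) - py g (x, b))"
    by (rule MVT2) (use h in \<open>auto intro!: derivative_eq_intros has_real_derivative_py diff sm\<close>)
  then obtain b where b: "y < b" "b < y + h" "\<Delta> = h * (py g (x + h, b) - py g (x, b))"
    unfolding \<Delta>_def by (auto simp: algebra_simps)
  have "\<exists>a. x < a \<and> a < x + h \<and> py g (x + h, b) - py g (x, b) = (x + h - x) * px (py g) (a, b)"
    by (rule MVT2) (use h b in \<open>auto intro!: has_real_derivative_px diff smooth_on_py sm\<close>)
  with b show "\<exists>a b. a \<in> {x<..<x + h} \<and> b \<in> {y<..<y + h} \<and> \<Delta> = h\<^sup>2 * px (py g) (a, b)"
    by (auto simp: power2_eq_square)
qed

lemma px_py_commute:
  assumes sm: "smooth_on S g" and S: "open S" and p: "p \<in> S"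
  shows "px (py g) p = py (px g) p"
proof (rule ccontr)
  assume ne: "px (py g) p \<noteq> py (px g) p"
  obtain x y where p_eq: "p = (x, y)"
    by (cases p)
  define e where "e = \<bar>px (py g) p - py (px g) p\<bar> / 2"
  have e: "e > 0"
    using ne by (simp add: e_def)
  obtain d0 where d0: "d0 > 0" "ball p d0 \<subseteq> S"
    using S p open_contains_ball by blast
  have "continuous (at p) (px (py g))" "continuous (at p) (py (px g))"
    using smooth_on_imp_continuous_on[OF smooth_on_px[OF smooth_on_py[OF sm]] S]
      smooth_on_imp_continuous_on[OF smooth_on_py[OF smooth_on_px[OF sm]] S] S p
    by (simp_all add: continuous_on_eq_continuous_at)
  then obtain d1 d2 where d12: "d1 > 0" "d2 > 0"
    "\<And>z. dist z p < d1 \<Longrightarrow> dist (px (py g) z) (px (py g) p) < e"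
    "\<And>z. dist z p < d2 \<Longrightarrow> dist (py (px g) z) (py (px g) p) < e"
    using e unfolding continuous_at_eps_delta by metis
  define h where "h = Min {d0, d1, d2} / 3"
  have h: "h > 0" "2 * h < d0" "2 * h < d1" "2 * h < d2"
    using d0 d12 by (auto simp: h_def)
  have near: "dist (a, b) p \<le> 2 * h" if "a \<in> {x..x + h}" "b \<in> {y..y + h}" for a b
    using dist_Pair_le_abs_sum[of a b x y] that h by (auto simp: p_eq)
  have box: "{x..x + h} \<times> {y..y + h} \<subseteq> S"
    using near h d0 by (force simp: dist_commute)
  obtain a b where ab: "a \<in> {x<..<x + h}" "b \<in> {y<..<y + h}"
    "g (x + h, y + h) - g (x, y + h) - g (x + h, y) + g (x, y) = h\<^sup>2 * py (px g) (a, b)"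
    using second_difference_eq_mixed_partial(1)[OF sm S h(1) box] by blast
  obtain a' b' where ab': "a' \<in> {x<..<x + h}" "b' \<in> {y<..<y + h}"
    "g (x + h, y + h) - g (x, y + h) - g (x + h, y) + g (x, y) = h\<^sup>2 * px (py g) (a', b')"
    using second_difference_eq_mixed_partial(2)[OF sm S h(1) box] by blast
  have "py (px g) (a, b) = px (py g) (a', b')"
    using ab(3) ab'(3) h by simp
  moreover have "dist (py (px g) (a, b)) (py (px g) p) < e"
    using d12(4) near[of a b] ab h by auto
  moreover have "dist (px (py g) (a', b')) (px (py g) p) < e"
    using d12(3) near[of a' b'] ab' h by auto
  ultimately show False
    unfolding e_def dist_real_def by (simp add: abs_less_iff abs_if split: if_splits)
qed

section \<open>One-variable derivative tests\<close>

lemma local_max_second_derivative: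
  fixes g g' :: "real \<Rightarrow> real"
  assumes d: "d > 0"
    and g': "\<And>t. \<bar>t - a\<bar> < d \<Longrightarrow> (g has_real_derivative g' t) (at t)"
    and g'': "(g' has_real_derivative D) (at a)"
    and max: "\<And>t. \<bar>t - a\<bar> < d \<Longrightarrow> g t \<le> g a"
  shows "g' a = 0" and "D \<le> 0"
proof -
  show crit: "g' a = 0"
    by (rule DERIV_local_max[OF g'[of a] d]) (use d max in \<open>auto simp: abs_minus_commute\<close>)
  show "D \<le> 0"
  proof (rule ccontr)
    assume "\<not> D \<le> 0"
    then obtain d' where d': "d' > 0" "\<And>h. h > 0 \<Longrightarrow> h < d' \<Longrightarrow> g' a < g' (a + h)"
      using DERIV_pos_inc_right[OF g''] by (metis not_le)
    define h where "h = min d d' / 2"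
    have h: "h > 0" "h < d" "h < d'"
      using d d' by (auto simp: h_def)
    obtain z where z: "a < z" "z < a + h" "g (a + h) - g a = h * g' z"
      using MVT2[of a "a + h" g g'] h g' by force
    have "g' z > 0"
      using d'(2)[of "z - a"] z h crit by simp
    then have "g (a + h) > g a"
      using z(3) h(1) by (smt (verit) mult_pos_pos)
    with max[of "a + h"] h show False
      by simp
  qed
qed

lemma local_max_weighted_second_derivative:
  fixes \<psi> \<psi>' W W' :: "real \<Rightarrow> real"
  assumes d: "d > 0"
    and \<psi>': "\<And>t. \<bar>t - a\<bar> < d \<Longrightarrow> (\<psi> has_real_derivative \<psi>' t) (at t)"
    and W': "\<And>t. \<bar>t - a\<bar> < d \<Longrightarrow> (W has_real_derivative W' t) (at t)"
    and \<psi>'': "(\<psi>' has_real_derivative \<psi>'') (at a)"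
    and W'': "(W' has_real_derivative W'') (at a)"
    and max: "\<And>t. \<bar>t - a\<bar> < d \<Longrightarrow> (\<psi> t)\<^sup>2 * W t \<le> (\<psi> a)\<^sup>2 * W a"
  shows "2 * \<psi> a * \<psi>' a * W a + (\<psi> a)\<^sup>2 * W' a = 0"
    and "(2 * (\<psi>' a)\<^sup>2 + 2 * \<psi> a * \<psi>'') * W a + 4 * \<psi> a * \<psi>' a * W' a + (\<psi> a)\<^sup>2 * W'' \<le> 0"
proof -
  have G': "((\<lambda>t. (\<psi> t)\<^sup>2 * W t) has_real_derivative 2 * \<psi> t * \<psi>' t * W t + (\<psi> t)\<^sup>2 * W' t) (at t)"
    if "\<bar>t - a\<bar> < d" for t
    using that by (auto intro!: derivative_eq_intros \<psi>' W' simp: algebra_simps)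
  have G'': "((\<lambda>t. 2 * \<psi> t * \<psi>' t * W t + (\<psi> t)\<^sup>2 * W' t) has_real_derivative
      (2 * (\<psi>' a)\<^sup>2 + 2 * \<psi> a * \<psi>'') * W a + 4 * \<psi> a * \<psi>' a * W' a + (\<psi> a)\<^sup>2 * W'') (at a)"
    using d by (auto intro!: derivative_eq_intros \<psi>' W' \<psi>'' W'' simp: algebra_simps power2_eq_square)
  from local_max_second_derivative[OF d G' G'' max]
  show "2 * \<psi> a * \<psi>' a * W a + (\<psi> a)\<^sup>2 * W' a = 0"
    and "(2 * (\<psi>' a)\<^sup>2 + 2 * \<psi> a * \<psi>'') * W a + 4 * \<psi> a * \<psi>' a * W' a + (\<psi> a)\<^sup>2 * W'' \<le> 0"
    by auto
qed

section \<open>The algebraic inequality at a maximum\<close>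

text \<open>In the next two lemmas \<open>p, q\<close> stand for \<open>f\<^sub>x/f, f\<^sub>y/f\<close>, \<open>s\<^sub>i\<^sub>j\<close> and \<open>t\<^sub>i\<^sub>j\<^sub>k\<close>
  for the second and third partial derivatives of \<open>f\<close> divided by \<open>f\<close> (indices 1 = x, 2 = y),
  and \<open>k\<close> for \<open>1/x\<close>. The hypotheses are the equation \<open>f\<^sub>x\<^sub>x + f\<^sub>y\<^sub>y + 3k f\<^sub>x = 0\<close> and its
  \<open>x\<close>- and \<open>y\<close>-derivatives; \<open>W = |\<nabla>log f|\<^sup>2\<close>, and \<open>Wx, Wy, Wxx, Wyy\<close> are its partial derivatives.\<close>

lemma bochner_lower_bound:
  fixes k p q s11 s12 s22 t111 t112 t122 t222 :: real
  assumes pde: "s11 + s22 + 3 * k * p = 0"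
    and pde_x: "t111 + t122 + 3 * k * s11 - 3 * k\<^sup>2 * p = 0"
    and pde_y: "t112 + t222 + 3 * k * s12 = 0"
  defines "W \<equiv> p\<^sup>2 + q\<^sup>2"
    and "Wx \<equiv> 2 * p * (s11 - p\<^sup>2) + 2 * q * (s12 - p * q)"
    and "Wy \<equiv> 2 * p * (s12 - p * q) + 2 * q * (s22 - q\<^sup>2)"
    and "Wxx \<equiv> 2 * ((s11 - p\<^sup>2)\<^sup>2 + p * (t111 - 3 * p * s11 + 2 * p ^ 3)
                 + (s12 - p * q)\<^sup>2 + q * (t112 - 2 * p * s12 - q * s11 + 2 * p\<^sup>2 * q))"
    and "Wyy \<equiv> 2 * ((s12 - p * q)\<^sup>2 + p * (t122 - 2 * q * s12 - p * s22 + 2 * p * q\<^sup>2)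
                 + (s22 - q\<^sup>2)\<^sup>2 + q * (t222 - 3 * q * s22 + 2 * q ^ 3))"
  shows "Wxx + Wyy + 3 * k * Wx \<ge> 2 / 5 * W\<^sup>2 - 2 * (p * Wx + q * Wy)"
proof -
  define u v w d where "u = s11 - p\<^sup>2" and "v = s22 - q\<^sup>2" and "w = k * p" and "d = s12 - p * q"
  have bochner: "Wxx + Wyy + 3 * k * Wx = 2 * u\<^sup>2 + 4 * d\<^sup>2 + 2 * v\<^sup>2 + 6 * w\<^sup>2 - 2 * (p * Wx + q * Wy)"
    using pde pde_x pde_y unfolding u_def v_def w_def d_def W_def Wx_def Wy_def Wxx_def Wyy_def
    by algebra
  have trace: "u + v + 3 * w = - W"
    using pde by (simp add: u_def v_def w_def W_def algebra_simps)
  have "5 * (u\<^sup>2 + v\<^sup>2 + 3 * w\<^sup>2) - (u + v + 3 * w)\<^sup>2 = (u - v)\<^sup>2 + 3 * (u - w)\<^sup>2 + 3 * (v - w)\<^sup>2"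
    by (simp add: power2_eq_square algebra_simps)
  then have "W\<^sup>2 \<le> 5 * u\<^sup>2 + 5 * v\<^sup>2 + 15 * w\<^sup>2"
    using trace by (smt (verit) power2_minus zero_le_power2)
  moreover have "d\<^sup>2 \<ge> 0"
    by simp
  ultimately show ?thesis
    unfolding bochner by linarith
qed

lemma cross_term_lower_bound:
  fixes P p q Px Py :: real
  shows "4 * P * (p * Px + q * Py) \<ge> - (P\<^sup>2 * (p\<^sup>2 + q\<^sup>2) / 5 + 20 * (Px\<^sup>2 + Py\<^sup>2))"
proof -
  have "4 * P * (p * Px + q * Py) + (P\<^sup>2 * (p\<^sup>2 + q\<^sup>2) / 5 + 20 * (Px\<^sup>2 + Py\<^sup>2))
      = ((P * p + 10 * Px)\<^sup>2 + (P * q + 10 * Py)\<^sup>2) / 5"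
    by (simp add: power2_eq_square algebra_simps)
  then show ?thesis
    by (smt (verit) divide_nonneg_pos zero_le_power2)
qed

text \<open>\<open>P, Px, \<dots>, Pyy\<close> are the cut-off and its derivatives at a maximum of \<open>P\<^sup>2 W\<close>;
  \<open>crit_x\<close>, \<open>crit_y\<close> and \<open>second\<close> are the first- and second-derivative tests there.
  The gradient cross term is absorbed by AM-GM, leaving a bound in terms of \<open>P\<close> alone.\<close>

lemma weighted_log_gradient_bound:
  fixes k P Px Py Pxx Pyy p q s11 s12 s22 t111 t112 t122 t222 :: real
  defines "W \<equiv> p\<^sup>2 + q\<^sup>2"
    and "Wx \<equiv> 2 * p * (s11 - p\<^sup>2) + 2 * q * (s12 - p * q)"
    and "Wy \<equiv> 2 * p * (s12 - p * q) + 2 * q * (s22 - q\<^sup>2)"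
    and "Wxx \<equiv> 2 * ((s11 - p\<^sup>2)\<^sup>2 + p * (t111 - 3 * p * s11 + 2 * p ^ 3)
                 + (s12 - p * q)\<^sup>2 + q * (t112 - 2 * p * s12 - q * s11 + 2 * p\<^sup>2 * q))"
    and "Wyy \<equiv> 2 * ((s12 - p * q)\<^sup>2 + p * (t122 - 2 * q * s12 - p * s22 + 2 * p * q\<^sup>2)
                 + (s22 - q\<^sup>2)\<^sup>2 + q * (t222 - 3 * q * s22 + 2 * q ^ 3))"
  assumes P: "P > 0" and W_pos: "W > 0"
    and pde: "s11 + s22 + 3 * k * p = 0"
    and pde_x: "t111 + t122 + 3 * k * s11 - 3 * k\<^sup>2 * p = 0"
    and pde_y: "t112 + t222 + 3 * k * s12 = 0"
    and crit_x: "2 * P * Px * W + P\<^sup>2 * Wx = 0"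
    and crit_y: "2 * P * Py * W + P\<^sup>2 * Wy = 0"
    and second: "(2 * Px\<^sup>2 + 2 * P * Pxx) * W + 4 * P * Px * Wx + P\<^sup>2 * Wxx
      + ((2 * Py\<^sup>2 + 2 * P * Pyy) * W + 4 * P * Py * Wy + P\<^sup>2 * Wyy) \<le> 0"
  shows "P\<^sup>2 * W \<le> 5 * (26 * (Px\<^sup>2 + Py\<^sup>2) - 2 * P * (Pxx + Pyy + 3 * k * Px))"
proof -
  define Q where "Q = Px\<^sup>2 + Py\<^sup>2"
  have "P * (2 * Px * W + P * Wx) = 0" "P * (2 * Py * W + P * Wy) = 0"
    using crit_x crit_y by (simp_all add: power2_eq_square algebra_simps)
  then have Wx: "P * Wx = - 2 * Px * W" and Wy: "P * Wy = - 2 * Py * W"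
    using P by simp_all
  have lower: "P\<^sup>2 * (Wxx + Wyy + 3 * k * Wx) \<ge> 2 / 5 * P\<^sup>2 * W\<^sup>2 + 4 * P * W * (p * Px + q * Py)"
  proof -
    have bochner: "Wxx + Wyy + 3 * k * Wx \<ge> 2 / 5 * W\<^sup>2 - 2 * (p * Wx + q * Wy)"
      unfolding W_def Wx_def Wy_def Wxx_def Wyy_def by (rule bochner_lower_bound[OF pde pde_x pde_y])
    have "2 / 5 * P\<^sup>2 * W\<^sup>2 + 4 * P * W * (p * Px + q * Py)
        = 2 / 5 * P\<^sup>2 * W\<^sup>2 - 2 * P * (p * (P * Wx) + q * (P * Wy))"
      unfolding Wx Wy by (simp add: algebra_simps)
    also have "\<dots> = P\<^sup>2 * (2 / 5 * W\<^sup>2 - 2 * (p * Wx + q * Wy))"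
      by (simp add: algebra_simps power2_eq_square)
    also have "\<dots> \<le> P\<^sup>2 * (Wxx + Wyy + 3 * k * Wx)"
      using mult_left_mono[OF bochner, of "P\<^sup>2"] by simp
    finally show ?thesis .
  qed
  from cross_term_lower_bound[of P p q Px Py]
  have "4 * P * (p * Px + q * Py) \<ge> - (P\<^sup>2 * W / 5 + 20 * Q)"
    unfolding W_def Q_def .
  from mult_right_mono[OF this, of W] W_pos
  have am_gm: "4 * P * W * (p * Px + q * Py) \<ge> - (P\<^sup>2 * W / 5 + 20 * Q) * W"
    by (simp add: algebra_simps)
  have "4 * P * Px * Wx = 4 * Px * (P * Wx)" "4 * P * Py * Wy = 4 * Py * (P * Wy)"
    "P\<^sup>2 * (3 * k * Wx) = 3 * k * P * (P * Wx)"
    by (simp_all add: power2_eq_square)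
  then have "(2 * Px\<^sup>2 + 2 * P * Pxx) * W + 4 * P * Px * Wx + P\<^sup>2 * Wxx
      + ((2 * Py\<^sup>2 + 2 * P * Pyy) * W + 4 * P * Py * Wy + P\<^sup>2 * Wyy)
    = (2 * Q + 2 * P * (Pxx + Pyy)) * W - 8 * Q * W + P\<^sup>2 * (Wxx + Wyy + 3 * k * Wx)
      + 6 * k * P * Px * W"
    unfolding Q_def Wx Wy by (simp add: algebra_simps power2_eq_square)
  with second
  have "(2 * Q + 2 * P * (Pxx + Pyy)) * W - 8 * Q * W + P\<^sup>2 * (Wxx + Wyy + 3 * k * Wx)
      + 6 * k * P * Px * W \<le> 0"
    by linarith
  with lower am_gm
  have "W * (2 * P * (Pxx + Pyy) + 6 * k * P * Px + 1 / 5 * P\<^sup>2 * W - 26 * Q) \<le> 0"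
    by (simp add: algebra_simps power2_eq_square)
  then have "2 * P * (Pxx + Pyy) + 6 * k * P * Px + 1 / 5 * P\<^sup>2 * W - 26 * Q \<le> 0"
    using W_pos by (meson mult_le_0_iff not_le)
  then show ?thesis
    by (simp add: Q_def algebra_simps)
qed

section \<open>The logarithmic gradient of a solution\<close>

lemma has_real_derivative_px_divide:
  assumes "smooth_on S g" "smooth_on S f" "open S" "(t, y) \<in> S" "f (t, y) \<noteq> 0"
  shows "((\<lambda>s. g (s, y) / f (s, y)) has_real_derivative
      px g (t, y) / f (t, y) - g (t, y) / f (t, y) * (px f (t, y) / f (t, y))) (at t)"
  using DERIV_divide[OF has_real_derivative_px has_real_derivative_px, of g t y f] assms
  by (simp add: smooth_on_imp_differentiable field_simps power2_eq_square)

lemma has_real_derivative_py_divide: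
  assumes "smooth_on S g" "smooth_on S f" "open S" "(x, t) \<in> S" "f (x, t) \<noteq> 0"
  shows "((\<lambda>s. g (x, s) / f (x, s)) has_real_derivative
      py g (x, t) / f (x, t) - g (x, t) / f (x, t) * (py f (x, t) / f (x, t))) (at t)"
  using DERIV_divide[OF has_real_derivative_py has_real_derivative_py, of g x t f] assms
  by (simp add: smooth_on_imp_differentiable field_simps power2_eq_square)

lemma has_real_derivative_x_eq_0_if_constant:
  fixes h :: "real \<times> real \<Rightarrow> real"
  assumes "open S" "(a, b) \<in> S" "\<And>z. z \<in> S \<Longrightarrow> h z = c"
    and "((\<lambda>s. h (s, b)) has_real_derivative D) (at a)"
  shows "D = 0"
proof -
  obtain e where e: "e > 0" "ball (a, b) e \<subseteq> S"
    using assms(1,2) open_contains_ball by blast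
  show ?thesis
  proof (rule DERIV_local_const[OF assms(4) e(1)], intro allI impI)
    fix s
    assume "\<bar>a - s\<bar> < e"
    then have "(s, b) \<in> S"
      using e(2) by (auto simp: dist_Pair_Pair dist_real_def)
    with assms(2,3) show "h (a, b) = h (s, b)"
      by simp
  qed
qed

lemma has_real_derivative_y_eq_0_if_constant:
  fixes h :: "real \<times> real \<Rightarrow> real"
  assumes "open S" "(a, b) \<in> S" "\<And>z. z \<in> S \<Longrightarrow> h z = c"
    and "((\<lambda>s. h (a, s)) has_real_derivative D) (at b)"
  shows "D = 0"
proof -
  obtain e where e: "e > 0" "ball (a, b) e \<subseteq> S"
    using assms(1,2) open_contains_ball by blast
  show ?thesis
  proof (rule DERIV_local_const[OF assms(4) e(1)], intro allI impI)
    fix s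
    assume "\<bar>b - s\<bar> < e"
    then have "(a, s) \<in> S"
      using e(2) by (auto simp: dist_Pair_Pair dist_real_def)
    with assms(2,3) show "h (a, b) = h (a, s)"
      by simp
  qed
qed

definition log_gradient_sq :: "(real \<times> real \<Rightarrow> real) \<Rightarrow> real \<times> real \<Rightarrow> real" where
  "log_gradient_sq f z = (px f z / f z)\<^sup>2 + (py f z / f z)\<^sup>2"

context
  fixes f :: "real \<times> real \<Rightarrow> real"
  assumes f_smooth: "smooth_on H2 f" and f_pos: "\<And>z. z \<in> H2 \<Longrightarrow> f z > 0"
begin

lemma log_gradient_sq_x_derivatives:
  defines "p \<equiv> \<lambda>z. px f z / f z" and "q \<equiv> \<lambda>z. py f z / f z"
    and "s11 \<equiv> \<lambda>z. px (px f) z / f z" and "s12 \<equiv> \<lambda>z. py (px f) z / f z"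
    and "t111 \<equiv> \<lambda>z. px (px (px f)) z / f z" and "t112 \<equiv> \<lambda>z. px (py (px f)) z / f z"
  defines "Wx \<equiv> \<lambda>z. 2 * p z * (s11 z - (p z)\<^sup>2) + 2 * q z * (s12 z - p z * q z)"
  assumes t: "t > 0"
  shows "((\<lambda>s. log_gradient_sq f (s, y)) has_real_derivative Wx (t, y)) (at t)"
    and "((\<lambda>s. Wx (s, y)) has_real_derivative
      2 * ((s11 (t, y) - (p (t, y))\<^sup>2)\<^sup>2
        + p (t, y) * (t111 (t, y) - 3 * p (t, y) * s11 (t, y) + 2 * p (t, y) ^ 3)
        + (s12 (t, y) - p (t, y) * q (t, y))\<^sup>2
        + q (t, y) * (t112 (t, y) - 2 * p (t, y) * s12 (t, y) - q (t, y) * s11 (t, y)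
                      + 2 * (p (t, y))\<^sup>2 * q (t, y)))) (at t)"
proof -
  have D: "((\<lambda>s. g (s, y) / f (s, y)) has_real_derivative
      px g (t, y) / f (t, y) - g (t, y) / f (t, y) * p (t, y)) (at t)"
    if "smooth_on H2 g" for g
    using has_real_derivative_px_divide[OF that f_smooth open_H2] t f_pos[of "(t, y)"]
    by (simp add: p_def)
  have comm: "px (py f) (t, y) = py (px f) (t, y)"
    using px_py_commute[OF f_smooth open_H2] t by simp
  note smooth = f_smooth smooth_on_px smooth_on_py
  have dp: "((\<lambda>s. p (s, y)) has_real_derivative s11 (t, y) - p (t, y) * p (t, y)) (at t)"
    using D[of "px f"] smooth by (simp add: p_def s11_def)
  have dq: "((\<lambda>s. q (s, y)) has_real_derivative s12 (t, y) - q (t, y) * p (t, y)) (at t)"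
    using D[of "py f"] smooth by (simp add: q_def s12_def comm)
  have ds11: "((\<lambda>s. s11 (s, y)) has_real_derivative t111 (t, y) - s11 (t, y) * p (t, y)) (at t)"
    using D[of "px (px f)"] smooth by (simp add: s11_def t111_def)
  have ds12: "((\<lambda>s. s12 (s, y)) has_real_derivative t112 (t, y) - s12 (t, y) * p (t, y)) (at t)"
    using D[of "py (px f)"] smooth by (simp add: s12_def t112_def)
  have W: "log_gradient_sq f = (\<lambda>z. (p z)\<^sup>2 + (q z)\<^sup>2)"
    by (simp add: fun_eq_iff log_gradient_sq_def p_def q_def)
  show "((\<lambda>s. log_gradient_sq f (s, y)) has_real_derivative Wx (t, y)) (at t)"
    unfolding W Wx_def
    by (auto intro!: derivative_eq_intros dp dq simp: algebra_simps power2_eq_square)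
  show "((\<lambda>s. Wx (s, y)) has_real_derivative
      2 * ((s11 (t, y) - (p (t, y))\<^sup>2)\<^sup>2
        + p (t, y) * (t111 (t, y) - 3 * p (t, y) * s11 (t, y) + 2 * p (t, y) ^ 3)
        + (s12 (t, y) - p (t, y) * q (t, y))\<^sup>2
        + q (t, y) * (t112 (t, y) - 2 * p (t, y) * s12 (t, y) - q (t, y) * s11 (t, y)
                      + 2 * (p (t, y))\<^sup>2 * q (t, y)))) (at t)"
    unfolding Wx_def
    by (auto intro!: derivative_eq_intros dp dq ds11 ds12 simp: algebra_simps power2_eq_square power3_eq_cube)
qed

lemma log_gradient_sq_y_derivatives:
  defines "p \<equiv> \<lambda>z. px f z / f z" and "q \<equiv> \<lambda>z. py f z / f z"
    and "s12 \<equiv> \<lambda>z. py (px f) z / f z" and "s22 \<equiv> \<lambda>z. py (py f) z / f z"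
    and "t122 \<equiv> \<lambda>z. py (py (px f)) z / f z" and "t222 \<equiv> \<lambda>z. py (py (py f)) z / f z"
  defines "Wy \<equiv> \<lambda>z. 2 * p z * (s12 z - p z * q z) + 2 * q z * (s22 z - (q z)\<^sup>2)"
  assumes x: "x > 0"
  shows "((\<lambda>s. log_gradient_sq f (x, s)) has_real_derivative Wy (x, t)) (at t)"
    and "((\<lambda>s. Wy (x, s)) has_real_derivative
      2 * ((s12 (x, t) - p (x, t) * q (x, t))\<^sup>2
        + p (x, t) * (t122 (x, t) - 2 * q (x, t) * s12 (x, t) - p (x, t) * s22 (x, t)
                      + 2 * p (x, t) * (q (x, t))\<^sup>2)
        + (s22 (x, t) - (q (x, t))\<^sup>2)\<^sup>2
        + q (x, t) * (t222 (x, t) - 3 * q (x, t) * s22 (x, t) + 2 * q (x, t) ^ 3))) (at t)"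
proof -
  have D: "((\<lambda>s. g (x, s) / f (x, s)) has_real_derivative
      py g (x, t) / f (x, t) - g (x, t) / f (x, t) * q (x, t)) (at t)"
    if "smooth_on H2 g" for g
    using has_real_derivative_py_divide[OF that f_smooth open_H2] x f_pos[of "(x, t)"]
    by (simp add: q_def)
  note smooth = f_smooth smooth_on_px smooth_on_py
  have dp: "((\<lambda>s. p (x, s)) has_real_derivative s12 (x, t) - p (x, t) * q (x, t)) (at t)"
    using D[of "px f"] smooth by (simp add: p_def s12_def)
  have dq: "((\<lambda>s. q (x, s)) has_real_derivative s22 (x, t) - q (x, t) * q (x, t)) (at t)"
    using D[of "py f"] smooth by (simp add: q_def s22_def)
  have ds12: "((\<lambda>s. s12 (x, s)) has_real_derivative t122 (x, t) - s12 (x, t) * q (x, t)) (at t)"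
    using D[of "py (px f)"] smooth by (simp add: s12_def t122_def)
  have ds22: "((\<lambda>s. s22 (x, s)) has_real_derivative t222 (x, t) - s22 (x, t) * q (x, t)) (at t)"
    using D[of "py (py f)"] smooth by (simp add: s22_def t222_def)
  have W: "log_gradient_sq f = (\<lambda>z. (p z)\<^sup>2 + (q z)\<^sup>2)"
    by (simp add: fun_eq_iff log_gradient_sq_def p_def q_def)
  show "((\<lambda>s. log_gradient_sq f (x, s)) has_real_derivative Wy (x, t)) (at t)"
    unfolding W Wy_def
    by (auto intro!: derivative_eq_intros dp dq simp: algebra_simps power2_eq_square)
  show "((\<lambda>s. Wy (x, s)) has_real_derivative
      2 * ((s12 (x, t) - p (x, t) * q (x, t))\<^sup>2
        + p (x, t) * (t122 (x, t) - 2 * q (x, t) * s12 (x, t) - p (x, t) * s22 (x, t)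
                      + 2 * p (x, t) * (q (x, t))\<^sup>2)
        + (s22 (x, t) - (q (x, t))\<^sup>2)\<^sup>2
        + q (x, t) * (t222 (x, t) - 3 * q (x, t) * s22 (x, t) + 2 * q (x, t) ^ 3))) (at t)"
    unfolding Wy_def
    by (auto intro!: derivative_eq_intros dp dq ds12 ds22
        simp: algebra_simps power2_eq_square power3_eq_cube)
qed

context
  assumes f_pde: "\<And>z. z \<in> H2 \<Longrightarrow> px (px f) z + py (py f) z + 3 / fst z * px f z = 0"
begin

lemma normalized_pde_and_derivatives:
  defines "p \<equiv> \<lambda>z. px f z / f z"
    and "s11 \<equiv> \<lambda>z. px (px f) z / f z" and "s12 \<equiv> \<lambda>z. py (px f) z / f z"
    and "s22 \<equiv> \<lambda>z. py (py f) z / f z"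
    and "t111 \<equiv> \<lambda>z. px (px (px f)) z / f z" and "t112 \<equiv> \<lambda>z. px (py (px f)) z / f z"
    and "t122 \<equiv> \<lambda>z. py (py (px f)) z / f z" and "t222 \<equiv> \<lambda>z. py (py (py f)) z / f z"
  assumes x: "x > 0"
  defines "k \<equiv> 1 / x"
  shows "s11 (x, y) + s22 (x, y) + 3 * k * p (x, y) = 0"
    and "t111 (x, y) + t122 (x, y) + 3 * k * s11 (x, y) - 3 * k\<^sup>2 * p (x, y) = 0"
    and "t112 (x, y) + t222 (x, y) + 3 * k * s12 (x, y) = 0"
proof -
  define L where "L z = px (px f) z + py (py f) z + 3 / fst z * px f z" for z
  have L: "L z = 0" if "z \<in> H2" for z
    using f_pde[OF that] by (simp add: L_def)
  have f_xy: "f (x, y) > 0"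
    using f_pos x by simp
  note smooth = f_smooth smooth_on_px smooth_on_py
  have diff: "g differentiable (at (x, y))" if "smooth_on H2 g" for g
    using smooth_on_imp_differentiable[OF that open_H2] x by simp
  show "s11 (x, y) + s22 (x, y) + 3 * k * p (x, y) = 0"
    using L[of "(x, y)"] x f_xy
    by (simp add: L_def s11_def s22_def p_def k_def field_simps)
  have "((\<lambda>s. L (s, y)) has_real_derivative px (px (px f)) (x, y) + px (py (py f)) (x, y)
      + (3 / x * px (px f) (x, y) - 3 / x\<^sup>2 * px f (x, y))) (at x)"
    unfolding L_def using x
    by (auto intro!: derivative_eq_intros has_real_derivative_px diff smooth
        simp: field_simps power2_eq_square)
  from has_real_derivative_x_eq_0_if_constant[OF open_H2 _ L this]
  have "px (px (px f)) (x, y) + px (py (py f)) (x, y)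
      + (3 / x * px (px f) (x, y) - 3 / x\<^sup>2 * px f (x, y)) = 0"
    using x by simp
  moreover have "px (py (py f)) (x, y) = py (py (px f)) (x, y)"
  proof -
    have "(\<lambda>s. px (py f) (x, s)) = (\<lambda>s. py (px f) (x, s))"
      using px_py_commute[OF f_smooth open_H2] x by auto
    then show ?thesis
      using px_py_commute[OF smooth_on_py[OF f_smooth] open_H2, of "(x, y)"] x
      by (simp add: py_def)
  qed
  moreover have "t111 (x, y) + t122 (x, y) + 3 * k * s11 (x, y) - 3 * k\<^sup>2 * p (x, y)
      = (px (px (px f)) (x, y) + py (py (px f)) (x, y)
         + (3 / x * px (px f) (x, y) - 3 / x\<^sup>2 * px f (x, y))) / f (x, y)"
    using f_xy x by (simp add: t111_def t122_def s11_def p_def k_def field_simps power2_eq_square)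
  ultimately show "t111 (x, y) + t122 (x, y) + 3 * k * s11 (x, y) - 3 * k\<^sup>2 * p (x, y) = 0"
    by simp
  have "((\<lambda>s. L (x, s)) has_real_derivative
      py (px (px f)) (x, y) + py (py (py f)) (x, y) + 3 / x * py (px f) (x, y)) (at y)"
    unfolding L_def using x
    by (auto intro!: derivative_eq_intros has_real_derivative_py diff smooth)
  from has_real_derivative_y_eq_0_if_constant[OF open_H2 _ L this]
  have "py (px (px f)) (x, y) + py (py (py f)) (x, y) + 3 / x * py (px f) (x, y) = 0"
    using x by simp
  moreover have "py (px (px f)) (x, y) = px (py (px f)) (x, y)"
    using px_py_commute[OF smooth_on_px[OF f_smooth] open_H2, of "(x, y)"] x by simp
  ultimately show "t112 (x, y) + t222 (x, y) + 3 * k * s12 (x, y) = 0"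
    using f_xy x by (simp add: t112_def t222_def s12_def k_def field_simps)
qed

lemma weighted_log_gradient_bound_at_max:
  fixes \<psi> :: "real \<times> real \<Rightarrow> real"
  assumes ball: "\<delta> > 0" "ball (a, b) \<delta> \<subseteq> H2"
    and \<psi>: "\<And>z. \<psi> differentiable (at z)" "\<And>z. px \<psi> differentiable (at z)"
      "\<And>z. py \<psi> differentiable (at z)"
    and max: "\<And>z. z \<in> ball (a, b) \<delta> \<Longrightarrow>
      (\<psi> z)\<^sup>2 * log_gradient_sq f z \<le> (\<psi> (a, b))\<^sup>2 * log_gradient_sq f (a, b)"
    and pos: "\<psi> (a, b) > 0" "log_gradient_sq f (a, b) > 0"
  shows "(\<psi> (a, b))\<^sup>2 * log_gradient_sq f (a, b) \<le> 5 * (26 * ((px \<psi> (a, b))\<^sup>2 + (py \<psi> (a, b))\<^sup>2)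
      - 2 * \<psi> (a, b) * (px (px \<psi>) (a, b) + py (py \<psi>) (a, b) + 3 / a * px \<psi> (a, b)))"
proof -
  have x_line: "(t, b) \<in> ball (a, b) \<delta>" if "\<bar>t - a\<bar> < \<delta>" for t
    using that by (simp add: dist_Pair_Pair dist_real_def abs_minus_commute)
  have y_line: "(a, s) \<in> ball (a, b) \<delta>" if "\<bar>s - b\<bar> < \<delta>" for s
    using that by (simp add: dist_Pair_Pair dist_real_def abs_minus_commute)
  have x_pos: "t > 0" if "\<bar>t - a\<bar> < \<delta>" for t
    using x_line[OF that] ball(2) by auto
  have a: "a > 0"
    using x_pos ball(1) by simp
  note x_test = local_max_weighted_second_derivative[OF ball(1)
      has_real_derivative_px[OF \<psi>(1)] log_gradient_sq_x_derivatives(1)[OF x_pos]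
      has_real_derivative_px[OF \<psi>(2)] log_gradient_sq_x_derivatives(2)[OF a] max[OF x_line]]
  note y_test = local_max_weighted_second_derivative[OF ball(1)
      has_real_derivative_py[OF \<psi>(1)] log_gradient_sq_y_derivatives(1)[OF a]
      has_real_derivative_py[OF \<psi>(3)] log_gradient_sq_y_derivatives(2)[OF a] max[OF y_line]]
  note pde = normalized_pde_and_derivatives[OF a, of b]
  from weighted_log_gradient_bound[OF pos(1) pos(2)[unfolded log_gradient_sq_def] pde
      x_test(1)[unfolded log_gradient_sq_def] y_test(1)[unfolded log_gradient_sq_def]
      add_nonpos_nonpos[OF x_test(2) y_test(2), unfolded log_gradient_sq_def]]
  show ?thesis
    by (simp add: log_gradient_sq_def)
qed

end

end

section \<open>Localisation with a cut-off\<close>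

definition cutoff :: "real \<times> real \<Rightarrow> real \<Rightarrow> real \<times> real \<Rightarrow> real" where
  "cutoff c r z = 1 - ((fst z - fst c)\<^sup>2 + (snd z - snd c)\<^sup>2) / r\<^sup>2"

lemma cutoff_eq: "cutoff c r z = 1 - (dist z c / r)\<^sup>2"
  by (simp add: cutoff_def dist_prod_def dist_real_def power_divide)

lemma px_cutoff: "px (cutoff c r) = (\<lambda>z. - 2 * (fst z - fst c) / r\<^sup>2)"
proof
  fix z :: "real \<times> real"
  have "((\<lambda>t. 1 - ((t - fst c)\<^sup>2 + (snd z - snd c)\<^sup>2) * inverse (r\<^sup>2)) has_real_derivative
      - 2 * (fst z - fst c) * inverse (r\<^sup>2)) (at (fst z))"
    by (auto intro!: derivative_eq_intros simp: algebra_simps)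
  then show "px (cutoff c r) z = - 2 * (fst z - fst c) / r\<^sup>2"
    by (simp add: px_def cutoff_def divide_inverse DERIV_imp_deriv)
qed

lemma py_cutoff: "py (cutoff c r) = (\<lambda>z. - 2 * (snd z - snd c) / r\<^sup>2)"
proof
  fix z :: "real \<times> real"
  have "((\<lambda>t. 1 - ((fst z - fst c)\<^sup>2 + (t - snd c)\<^sup>2) * inverse (r\<^sup>2)) has_real_derivative
      - 2 * (snd z - snd c) * inverse (r\<^sup>2)) (at (snd z))"
    by (auto intro!: derivative_eq_intros simp: algebra_simps)
  then show "py (cutoff c r) z = - 2 * (snd z - snd c) / r\<^sup>2"
    by (simp add: py_def cutoff_def divide_inverse DERIV_imp_deriv)
qed

lemma px_px_cutoff: "px (px (cutoff c r)) z = - 2 / r\<^sup>2"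
proof -
  have "((\<lambda>t. - 2 * (t - fst c) * inverse (r\<^sup>2)) has_real_derivative - 2 * inverse (r\<^sup>2)) (at (fst z))"
    by (auto intro!: derivative_eq_intros)
  then show ?thesis
    by (simp add: px_cutoff px_def divide_inverse DERIV_imp_deriv)
qed

lemma py_py_cutoff: "py (py (cutoff c r)) z = - 2 / r\<^sup>2"
proof -
  have "((\<lambda>t. - 2 * (t - snd c) * inverse (r\<^sup>2)) has_real_derivative - 2 * inverse (r\<^sup>2)) (at (snd z))"
    by (auto intro!: derivative_eq_intros)
  then show ?thesis
    by (simp add: py_cutoff py_def divide_inverse DERIV_imp_deriv)
qed

lemma cutoff_differentiable:
  shows "cutoff c r differentiable (at z)" and "px (cutoff c r) differentiable (at z)"
    and "py (cutoff c r) differentiable (at z)"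
  using bounded_linear_imp_differentiable[OF bounded_linear_fst]
    bounded_linear_imp_differentiable[OF bounded_linear_snd]
  unfolding px_cutoff py_cutoff cutoff_def divide_inverse
  by (auto intro!: derivative_intros)

lemma cutoff_bound:
  assumes r: "r > 0" and z: "dist z c < r" and far: "fst z > r"
  defines "\<psi> \<equiv> cutoff c r"
  shows "5 * (26 * ((px \<psi> z)\<^sup>2 + (py \<psi> z)\<^sup>2)
      - 2 * \<psi> z * (px (px \<psi>) z + py (py \<psi>) z + 3 / fst z * px \<psi> z)) \<le> 620 / r\<^sup>2"
proof -
  define u v where "u = fst z - fst c" and "v = snd z - snd c"
  have "u\<^sup>2 + v\<^sup>2 = (dist z c)\<^sup>2"
    by (simp add: u_def v_def dist_prod_def dist_real_def)
  then have uv: "u\<^sup>2 + v\<^sup>2 < r\<^sup>2"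
    using z by (simp add: power_strict_mono)
  have \<psi>: "0 < \<psi> z" "\<psi> z \<le> 1"
    using uv r by (simp_all add: \<psi>_def cutoff_def u_def v_def field_simps)
  have grad: "(px \<psi> z)\<^sup>2 + (py \<psi> z)\<^sup>2 \<le> 4 / r\<^sup>2"
  proof -
    have "(px \<psi> z)\<^sup>2 + (py \<psi> z)\<^sup>2 = 4 * (u\<^sup>2 + v\<^sup>2) / r\<^sup>2 / r\<^sup>2"
      using r by (simp add: \<psi>_def px_cutoff py_cutoff u_def v_def power_divide field_simps)
        (simp add: power2_eq_square algebra_simps)
    also have "\<dots> \<le> 4 / r\<^sup>2"
      by (intro divide_right_mono) (use uv r in \<open>auto simp: field_simps\<close>)
    finally show ?thesis .
  qed
  have "u\<^sup>2 < r\<^sup>2"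
    using uv zero_le_power2[of v] by linarith
  then have "\<bar>u\<bar> < r"
    using power2_less_imp_less[of "\<bar>u\<bar>" r] r by simp
  then have "u / fst z \<le> 1"
    using far r by (simp add: divide_le_eq_1)
  then have "\<psi> z * (u / fst z) \<le> 1"
    using \<psi> mult_left_mono[of "u / fst z" 1 "\<psi> z"] by linarith
  then have "(8 * \<psi> z + 12 * (\<psi> z * (u / fst z))) / r\<^sup>2 \<le> 20 / r\<^sup>2"
    using \<psi> by (intro divide_right_mono) auto
  moreover have "- (2 * \<psi> z * (px (px \<psi>) z + py (py \<psi>) z + 3 / fst z * px \<psi> z))
      = (8 * \<psi> z + 12 * (\<psi> z * (u / fst z))) / r\<^sup>2"
    unfolding \<psi>_def px_px_cutoff py_py_cutoff
    using r far by (simp add: px_cutoff u_def field_simps)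
  ultimately have "- (2 * \<psi> z * (px (px \<psi>) z + py (py \<psi>) z + 3 / fst z * px \<psi> z)) \<le> 20 * (1 / r\<^sup>2)"
    by simp
  moreover have "(px \<psi> z)\<^sup>2 + (py \<psi> z)\<^sup>2 \<le> 4 * (1 / r\<^sup>2)"
    using grad by simp
  moreover have "5 * (26 * A - B) \<le> 620 * T" if "A \<le> 4 * T" "- B \<le> 20 * T" for A B T :: real
    using that by (simp add: algebra_simps)
  ultimately show ?thesis
    by simp
qed

lemma continuous_on_cball_attains_max_in_ball:
  fixes G :: "'a::heine_borel \<Rightarrow> real"
  assumes cont: "continuous_on (cball c r) G" and r: "r \<ge> 0"
    and boundary: "\<And>z. dist c z = r \<Longrightarrow> G z < G c"
  obtains q where "q \<in> ball c r" and "\<And>z. z \<in> cball c r \<Longrightarrow> G z \<le> G q"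
proof -
  obtain q where q: "q \<in> cball c r" "\<And>z. z \<in> cball c r \<Longrightarrow> G z \<le> G q"
    using continuous_attains_sup[OF compact_cball _ cont] r by (metis centre_in_cball empty_iff)
  have "dist c q \<noteq> r"
    using boundary[of q] q(2)[of c] r by force
  with q(1) have "q \<in> ball c r"
    by (simp add: order_less_le)
  with q(2) that show thesis
    by blast
qed

context
  fixes f :: "real \<times> real \<Rightarrow> real"
  assumes f_smooth: "smooth_on H2 f" and f_pos: "\<And>z. z \<in> H2 \<Longrightarrow> f z > 0"
    and f_pde: "\<And>z. z \<in> H2 \<Longrightarrow> px (px f) z + py (py f) z + 3 / fst z * px f z = 0"
begin

lemma continuous_on_log_gradient_sq: "continuous_on H2 (log_gradient_sq f)"
proof -
  have "continuous_on H2 g" if "smooth_on H2 g" for g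
    using smooth_on_imp_continuous_on[OF that open_H2] .
  then show ?thesis
    unfolding log_gradient_sq_def using f_pos
    by (auto intro!: continuous_intros f_smooth smooth_on_px smooth_on_py simp: less_imp_neq[symmetric])
qed

lemma cball_subset_H2:
  assumes "r < fst c"
  shows "cball c r \<subseteq> H2"
proof
  fix z
  assume "z \<in> cball c r"
  with dist_fst_le[of c z] have "\<bar>fst c - fst z\<bar> \<le> r"
    by (simp add: dist_real_def)
  with assms show "z \<in> H2"
    by (simp add: H2_def abs_le_iff)
qed

lemma cutoff_weighted_bound_at_max:
  assumes r: "r > 0" "2 * r \<le> fst c" and q: "q \<in> ball c r"
    and max: "\<And>z. z \<in> cball c r \<Longrightarrow>
      (cutoff c r z)\<^sup>2 * log_gradient_sq f z \<le> (cutoff c r q)\<^sup>2 * log_gradient_sq f q"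
    and W_pos: "log_gradient_sq f q > 0"
  shows "(cutoff c r q)\<^sup>2 * log_gradient_sq f q \<le> 620 / r\<^sup>2"
proof -
  obtain a b where q_eq: "q = (a, b)"
    by (cases q)
  define \<delta> where "\<delta> = r - dist c q"
  have \<delta>: "\<delta> > 0"
    using q by (simp add: \<delta>_def)
  have ball_q: "ball q \<delta> \<subseteq> cball c r"
  proof
    fix z
    assume "z \<in> ball q \<delta>"
    then have "dist c q + dist q z < r"
      by (simp add: \<delta>_def)
    then show "z \<in> cball c r"
      using dist_triangle[of c z q] by simp
  qed
  have "cutoff c r q > 0"
    using q r by (simp add: cutoff_eq dist_commute power_divide power_strict_mono)
  moreover have "ball (a, b) \<delta> \<subseteq> H2"
    using ball_q cball_subset_H2[of r c] r q_eq by simp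
  moreover have "(cutoff c r z)\<^sup>2 * log_gradient_sq f z \<le> (cutoff c r (a, b))\<^sup>2 * log_gradient_sq f (a, b)"
    if "z \<in> ball (a, b) \<delta>" for z
    using max ball_q that q_eq by blast
  ultimately have "(cutoff c r q)\<^sup>2 * log_gradient_sq f q
      \<le> 5 * (26 * ((px (cutoff c r) q)\<^sup>2 + (py (cutoff c r) q)\<^sup>2)
        - 2 * cutoff c r q * (px (px (cutoff c r)) q + py (py (cutoff c r)) q
          + 3 / fst q * px (cutoff c r) q))"
    using weighted_log_gradient_bound_at_max[where \<psi> = "cutoff c r",
        OF f_smooth f_pos f_pde \<delta> _ cutoff_differentiable] W_pos
    by (simp add: q_eq)
  also have "\<dots> \<le> 620 / r\<^sup>2"
  proof (rule cutoff_bound[OF r(1)])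
    show "dist q c < r"
      using q by (simp add: dist_commute)
    with dist_fst_le[of q c] r(2) show "fst q > r"
      by (simp add: dist_real_def abs_less_iff)
  qed
  finally show ?thesis .
qed

lemma log_gradient_sq_bound:
  assumes x0: "x0 > 0"
  shows "x0\<^sup>2 * log_gradient_sq f (x0, y0) \<le> 2480"
proof (cases "log_gradient_sq f (x0, y0) = 0")
  case True
  then show ?thesis
    by simp
next
  case False
  define c r where "c = (x0, y0)" and "r = x0 / 2"
  define G where "G z = (cutoff c r z)\<^sup>2 * log_gradient_sq f z" for z
  have r: "r > 0" "2 * r \<le> fst c"
    using x0 by (simp_all add: r_def c_def)
  have W_nonneg: "log_gradient_sq f z \<ge> 0" for z
    by (simp add: log_gradient_sq_def)
  have centre: "cutoff c r c = 1"
    by (simp add: cutoff_def)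
  have "log_gradient_sq f c > 0"
    using False W_nonneg[of c] by (simp add: c_def order_less_le)
  then have Gc: "G c = log_gradient_sq f c" "G c > 0"
    by (simp_all add: G_def centre)
  have "continuous_on (cball c r) G"
    unfolding G_def cutoff_def using r cball_subset_H2[of r c]
    by (intro continuous_intros continuous_on_subset[OF continuous_on_log_gradient_sq]) auto
  moreover have "G z < G c" if "dist c z = r" for z
    using that Gc r by (simp add: G_def cutoff_eq dist_commute)
  ultimately obtain q where q: "q \<in> ball c r" "\<And>z. z \<in> cball c r \<Longrightarrow> G z \<le> G q"
    using continuous_on_cball_attains_max_in_ball r by (metis less_imp_le)
  have "G q > 0"
    using q(2)[of c] Gc r by simp
  then have "log_gradient_sq f q > 0"
    using W_nonneg[of q] unfolding G_def by (cases "log_gradient_sq f q = 0") auto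
  from cutoff_weighted_bound_at_max[OF r q(1) q(2)[unfolded G_def] this]
  have "log_gradient_sq f c \<le> 620 / r\<^sup>2"
    using order_trans[OF q(2)[of c]] r by (simp add: G_def centre)
  then show ?thesis
    using x0 by (simp add: c_def r_def field_simps)
qed

end

theorem proposition4p3:
  "\<exists>c::real. \<forall>f :: real \<times> real \<Rightarrow> real.
     smooth_on H2 f \<and> (\<forall>p\<in>H2. f p > 0) \<and>
     (\<forall>p\<in>H2. px (px f) p + py (py f) p + 3 / fst p * px f p = 0)
     \<longrightarrow> (\<forall>p\<in>H2. fst p * sqrt ((px f p / f p)\<^sup>2 + (py f p / f p)\<^sup>2) < c)"
proof (intro exI[of _ 50] allI impI ballI)
  fix f :: "real \<times> real \<Rightarrow> real" and p :: "real \<times> real"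
  assume f: "smooth_on H2 f \<and> (\<forall>p\<in>H2. f p > 0) \<and>
     (\<forall>p\<in>H2. px (px f) p + py (py f) p + 3 / fst p * px f p = 0)"
    and p: "p \<in> H2"
  from f have "smooth_on H2 f" "\<And>z. z \<in> H2 \<Longrightarrow> f z > 0"
    "\<And>z. z \<in> H2 \<Longrightarrow> px (px f) z + py (py f) z + 3 / fst z * px f z = 0"
    by blast+
  from log_gradient_sq_bound[OF this, of "fst p" "snd p"] p
  have "(fst p)\<^sup>2 * log_gradient_sq f p \<le> 2480"
    by (simp add: H2_def)
  have "fst p * sqrt (log_gradient_sq f p) = sqrt ((fst p)\<^sup>2 * log_gradient_sq f p)"
    using p by (simp add: H2_def real_sqrt_mult)
  also have "\<dots> \<le> sqrt 2480"
    using \<open>(fst p)\<^sup>2 * log_gradient_sq f p \<le> 2480\<close> by simp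
  also have "\<dots> < 50"
    by (simp add: real_sqrt_less_iff real_less_lsqrt)
  finally show "fst p * sqrt ((px f p / f p)\<^sup>2 + (py f p / f p)\<^sup>2) < 50"
    by (simp add: log_gradient_sq_def)
qed

end
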